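(* Let $b \geq 2$, $s \geq 1$ and $m \geq 1$ be integers, and let $\mathcal{P} = \{\boldsymbol{x}_0,\dots,\boldsymbol{x}_{b^m-1}\}$ be a family of $b^m$ points in $[0,1)^s$. Then $\mathcal{P}$ is $s$-admissible in base $b$ if and only if $\mathcal{P}$ is a $(0,m,s)$-net in base $b$. Moreover, $\mathcal{P}$ is not $d$-admissible in base $b$ for any integer $d < s$.
   Context: A $(0,m,s)$-net in base $b$ is a family of $b^m$ points in $[0,1)^s$ such that every interval $\prod_{i=1}^s [a_i b^{-d_i},(a_i+1)b^{-d_i})$ with $d_i \in \mathbb{N}_0$, $a_i \in \{0,\dots,b^{d_i}-1\}$ and volume $b^{-m}$ contains exactly one point of the family. Each $x \in [0,1)$ is written in its $b$-adic expansion $x = \sum_{i\geq 1} x_i b^{-i}$, $x_i \in \{0,\dots,b-1\}$ (not ending in infinitely many digits $b-1$). For $x, y \in [0,1)$, $x \ominus y = \sum_{i \geq 1} z_i b^{-i}$ with $z_i \equiv x_i - y_i \pmod b$, $z_i \in\{0,\dots,b-1\}$. For $z = \sum_{i\geq1} z_i b^{-i}$ with $z_1=\dots=z_k=0$ and $z_{k+1}\neq 0$, set $\|z\|_b = b^{-(k+1)}$, and $\|z\|_b = 0$ if all digits vanish. For points $\boldsymbol{x}=(x^{(1)},\dots,x^{(s)})$, $\boldsymbol{y}$, let $\boldsymbol{x}\ominus\boldsymbol{y} = (x^{(1)}\ominus y^{(1)},\dots,x^{(s)}\ominus y^{(s)})$ and $\|\boldsymbol{z}\|_b = \prod_{j=1}^s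 \|z^{(j)}\|_b$. For an integer $d$, the family $\mathcal{P}$ is $d$-admissible in base $b$ if $\min_{0 \leq k < n < b^m} \|\boldsymbol{x}_n \ominus \boldsymbol{x}_k\|_b > b^{-(m+d)}$. *)

theory Defs
  imports Complex_Main
begin

text \<open>i-th b-adic digit (i >= 1) of x in [0,1); the floor-based digit never
  yields an expansion ending in infinitely many digits b-1.\<close>
definition bdigit :: "nat \<Rightarrow> real \<Rightarrow> nat \<Rightarrow> nat" where
  "bdigit b x i = nat \<lfloor>x * real b ^ i\<rfloor> mod b"

text \<open>The quantity norm_b(x minus_b y): z_i = (x_i - y_i) mod b vanishes iff x_i = y_i,
  so the first nonzero digit of z is the first index where the digits of x and y differ.\<close>
definition ominus_norm :: "nat \<Rightarrow> real \<Rightarrow> real \<Rightarrow> real" where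
  "ominus_norm b x y =
     (if \<forall>i\<ge>1. bdigit b x i = bdigit b y i then 0
      else 1 / real b ^ (LEAST i. 1 \<le> i \<and> bdigit b x i \<noteq> bdigit b y i))"

definition pnorm :: "nat \<Rightarrow> nat \<Rightarrow> (nat \<Rightarrow> real) \<Rightarrow> (nat \<Rightarrow> real) \<Rightarrow> real" where
  "pnorm b s X Y = (\<Prod>j<s. ominus_norm b (X j) (Y j))"

definition admissible :: "nat \<Rightarrow> nat \<Rightarrow> nat \<Rightarrow> int \<Rightarrow> (nat \<Rightarrow> nat \<Rightarrow> real) \<Rightarrow> bool" where
  "admissible b m s d x \<longleftrightarrow>
     Min {pnorm b s (x n) (x k) | k n. k < n \<and> n < b ^ m} > real b powi (- (int m + d))"

text \<open>(0,m,s)-net in base b: every elementary interval of volume b^(-m) contains exactly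
  one point of the family (counted with index). Volume b^(-m) iff sum of d_j = m.\<close>
definition is_net :: "nat \<Rightarrow> nat \<Rightarrow> nat \<Rightarrow> (nat \<Rightarrow> nat \<Rightarrow> real) \<Rightarrow> bool" where
  "is_net b m s x \<longleftrightarrow>
     (\<forall>dd a. (\<forall>j<s. a j < b ^ dd j) \<and> (\<Sum>j<s. dd j) = m \<longrightarrow>
        card {n. n < b ^ m \<and>
                 (\<forall>j<s. real (a j) / real b ^ dd j \<le> x n j \<and>
                        x n j < (real (a j) + 1) / real b ^ dd j)} = 1)"

end

theory Submission
  imports Defs "HOL-Library.FuncSet"
begin

text \<open>Let bcell b x k = \<lfloor>x b^k\<rfloor> be the index of the b-adic interval of length b^-k
  containing x. For x, y in [0,1), the bound norm_b(x minus_b y) \<le> b^-(k+1) says that the first k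
  digits agree, i.e. that x and y lie in the same such interval. Each factor of the product norm
  is 0 or of the form b^-(c+1), so norm_b(x_n minus_b x_k) \<le> b^-(t+s) holds iff for some
  resolutions d_1 + ... + d_s = t the two points share an elementary interval of that shape.
  For t = m this means: the family is s-admissible iff, for every shape of volume b^-m, distinct
  points lie in distinct intervals; as there are b^m points and b^m intervals of each shape, this
  is the net property. For d < s, the b^m points do not fit injectively into the b^(m-1)
  intervals of shape (m-1,0,...,0), which yields two points at distance at most
  b^-(m-1+s) \<le> b^-(m+d).\<close>

lemma inverse_power_le_iff: "1 < b \<Longrightarrow> 1 / real b ^ n \<le> 1 / real b ^ k \<longleftrightarrow> k \<le> n"
  by (simp add: divide_simps power_increasing_iff)

lemma prod_inverse_powers:
  fixes s :: nat
  shows "(\<Prod>j<s. 1 / real b ^ Suc (c j)) = 1 / real b ^ ((\<Sum>j<s. c j) + s)"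
  by (induction s) (simp_all add: power_add)

lemma sum_split_below:
  fixes c :: "nat \<Rightarrow> nat" and s :: nat
  shows "t \<le> (\<Sum>j<s. c j) \<Longrightarrow> \<exists>dd. (\<Sum>j<s. dd j) = t \<and> (\<forall>j<s. dd j \<le> c j)"
proof (induction s arbitrary: t)
  case 0
  then show ?case by auto
next
  case (Suc s)
  show ?case
  proof (cases "t \<le> (\<Sum>j<s. c j)")
    case True
    then obtain dd where "(\<Sum>j<s. dd j) = t" "\<forall>j<s. dd j \<le> c j"
      using Suc.IH by blast
    then show ?thesis
      by (intro exI[of _ "dd(s := 0)"]) (auto simp: less_Suc_eq)
  next
    case False
    then show ?thesis using Suc.prems
      by (intro exI[of _ "c(s := t - (\<Sum>j<s. c j))"]) (auto simp: less_Suc_eq)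
  qed
qed

lemma card_fibres_eq_1_iff_inj_on:
  assumes "finite B" "card A = card B" "f ` A \<subseteq> B"
  shows "(\<forall>y\<in>B. card {x\<in>A. f x = y} = 1) \<longleftrightarrow> inj_on f A"
proof
  assume fibres: "\<forall>y\<in>B. card {x\<in>A. f x = y} = 1"
  show "inj_on f A"
  proof (rule inj_onI)
    fix x x' assume "x \<in> A" "x' \<in> A" "f x = f x'"
    moreover from \<open>x \<in> A\<close> have "card {z\<in>A. f z = f x} = 1"
      using fibres assms(3) by blast
    then obtain z where "{z\<in>A. f z = f x} = {z}" by (rule card_1_singletonE)
    ultimately show "x = x'" by (metis (mono_tags, lifting) mem_Collect_eq singletonD)
  qed
next
  assume inj: "inj_on f A"
  then have image: "f ` A = B"
    using assms by (metis card_image card_subset_eq)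
  show "\<forall>y\<in>B. card {x\<in>A. f x = y} = 1"
  proof
    fix y assume "y \<in> B"
    then obtain x where "x \<in> A" "y = f x" using image by blast
    then have "{z\<in>A. f z = y} = {x}" using inj by (auto dest: inj_onD)
    then show "card {x\<in>A. f x = y} = 1" by simp
  qed
qed

lemma not_inj_on_lessThan_iff:
  "\<not> inj_on f {..<N} \<longleftrightarrow> (\<exists>k n. k < n \<and> n < N \<and> f n = f (k::nat))"
proof
  assume "\<not> inj_on f {..<N}"
  then obtain k n where "k < N" "n < N" "k \<noteq> n" "f k = f n"
    unfolding inj_on_def by auto
  then show "\<exists>k n. k < n \<and> n < N \<and> f n = f k"
    by (metis linorder_neqE_nat)
next
  assume "\<exists>k n. k < n \<and> n < N \<and> f n = f k"
  then show "\<not> inj_on f {..<N}"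
    unfolding inj_on_def by fastforce
qed

lemma all_restrict_iff_Ball_PiE:
  "(\<forall>a. (\<forall>j\<in>I. a j \<in> S j) \<longrightarrow> P (restrict a I)) \<longleftrightarrow> (\<forall>y\<in>(\<Pi>\<^sub>E j\<in>I. S j). P y)"
proof
  assume all: "\<forall>a. (\<forall>j\<in>I. a j \<in> S j) \<longrightarrow> P (restrict a I)"
  show "\<forall>y\<in>(\<Pi>\<^sub>E j\<in>I. S j). P y"
  proof
    fix y assume y: "y \<in> (\<Pi>\<^sub>E j\<in>I. S j)"
    then have "P (restrict y I)" using all by blast
    then show "P y" using y by simp
  qed
next
  assume "\<forall>y\<in>(\<Pi>\<^sub>E j\<in>I. S j). P y"
  then show "\<forall>a. (\<forall>j\<in>I. a j \<in> S j) \<longrightarrow> P (restrict a I)"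
    by (simp add: restrict_PiE_iff)
qed

definition bcell :: "nat \<Rightarrow> real \<Rightarrow> nat \<Rightarrow> int" where
  "bcell b x k = \<lfloor>x * real b ^ k\<rfloor>"

lemma bcell_0: "0 \<le> x \<Longrightarrow> x < 1 \<Longrightarrow> bcell b x 0 = 0"
  by (simp add: bcell_def floor_eq_iff)

lemma bcell_nonneg: "0 \<le> x \<Longrightarrow> 0 \<le> bcell b x k"
  by (simp add: bcell_def)

lemma bcell_less: "0 < b \<Longrightarrow> x < 1 \<Longrightarrow> bcell b x k < int b ^ k"
  by (simp add: bcell_def floor_less_iff)

lemma bcell_Suc_div:
  assumes "0 < b"
  shows "bcell b x (Suc k) div int b = bcell b x k"
proof -
  have "bcell b x k = \<lfloor>x * real b ^ Suc k / real_of_int (int b)\<rfloor>"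
    using assms by (simp add: bcell_def)
  also have "\<dots> = bcell b x (Suc k) div int b"
    by (subst floor_divide_real_eq_div) (auto simp: bcell_def)
  finally show ?thesis by simp
qed

lemma bdigit_bcell: "0 \<le> x \<Longrightarrow> bdigit b x i = nat (bcell b x i mod int b)"
  by (simp add: bdigit_def bcell_def nat_mod_distrib)

lemma bcell_Suc_eq_iff:
  assumes "0 < b" "0 \<le> x" "0 \<le> y"
  shows "bcell b x (Suc k) = bcell b y (Suc k) \<longleftrightarrow>
    bcell b x k = bcell b y k \<and> bdigit b x (Suc k) = bdigit b y (Suc k)"
proof -
  have split: "bcell b z (Suc k) = int b * bcell b z k + bcell b z (Suc k) mod int b" for z
    by (metis bcell_Suc_div[OF assms(1)] div_mult_mod_eq mult.commute)
  have digit: "bdigit b x (Suc k) = bdigit b y (Suc k) \<longleftrightarrow>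
      bcell b x (Suc k) mod int b = bcell b y (Suc k) mod int b"
    using assms by (simp add: bdigit_bcell eq_nat_nat_iff)
  show ?thesis
  proof
    assume "bcell b x (Suc k) = bcell b y (Suc k)"
    then show "bcell b x k = bcell b y k \<and> bdigit b x (Suc k) = bdigit b y (Suc k)"
      using digit bcell_Suc_div[OF assms(1), of x k] bcell_Suc_div[OF assms(1), of y k] by simp
  next
    assume "bcell b x k = bcell b y k \<and> bdigit b x (Suc k) = bdigit b y (Suc k)"
    then have "int b * bcell b x k + bcell b x (Suc k) mod int b =
        int b * bcell b y k + bcell b y (Suc k) mod int b"
      using digit by simp
    then show "bcell b x (Suc k) = bcell b y (Suc k)"
      using split[of x] split[of y] by linarith
  qed
qed

lemma bcell_eq_iff_bdigits:
  assumes "0 < b" "0 \<le> x" "x < 1" "0 \<le> y" "y < 1"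
  shows "bcell b x k = bcell b y k \<longleftrightarrow> (\<forall>i. 1 \<le> i \<and> i \<le> k \<longrightarrow> bdigit b x i = bdigit b y i)"
proof (induction k)
  case 0
  then show ?case using assms bcell_0 by auto
next
  case (Suc k)
  then show ?case unfolding bcell_Suc_eq_iff[OF assms(1,2,4)]
    by (auto simp: le_Suc_eq)
qed

lemma ominus_norm_nonneg: "0 \<le> ominus_norm b x y"
  by (simp add: ominus_norm_def)

lemma ominus_norm_first_difference:
  assumes "\<exists>i\<ge>1. bdigit b x i \<noteq> bdigit b y i"
  obtains L where "1 \<le> L" "bdigit b x L \<noteq> bdigit b y L"
    and "\<And>i. 1 \<le> i \<Longrightarrow> i < L \<Longrightarrow> bdigit b x i = bdigit b y i"
    and "ominus_norm b x y = 1 / real b ^ L"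
proof
  define L where "L = (LEAST i. 1 \<le> i \<and> bdigit b x i \<noteq> bdigit b y i)"
  have "\<exists>i. 1 \<le> i \<and> bdigit b x i \<noteq> bdigit b y i" using assms by blast
  from LeastI_ex[OF this] show "1 \<le> L" "bdigit b x L \<noteq> bdigit b y L"
    unfolding L_def by blast+
  show "\<And>i. 1 \<le> i \<Longrightarrow> i < L \<Longrightarrow> bdigit b x i = bdigit b y i"
    unfolding L_def using not_less_Least by blast
  show "ominus_norm b x y = 1 / real b ^ L"
    using assms unfolding ominus_norm_def L_def by auto
qed

lemma ominus_norm_cases: "ominus_norm b x y = 0 \<or> (\<exists>c. ominus_norm b x y = 1 / real b ^ Suc c)"
proof (cases "\<forall>i\<ge>1. bdigit b x i = bdigit b y i")
  case True
  then show ?thesis by (simp add: ominus_norm_def)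
next
  case False
  then have "\<exists>i\<ge>1. bdigit b x i \<noteq> bdigit b y i" by blast
  then obtain L where "1 \<le> L" "ominus_norm b x y = 1 / real b ^ L"
    by (rule ominus_norm_first_difference) (rule that)
  then have "ominus_norm b x y = 1 / real b ^ Suc (L - 1)" by simp
  then show ?thesis by blast
qed

lemma ominus_norm_le_iff_bcell_eq:
  assumes "1 < b" "0 \<le> x" "x < 1" "0 \<le> y" "y < 1"
  shows "ominus_norm b x y \<le> 1 / real b ^ Suc k \<longleftrightarrow> bcell b x k = bcell b y k"
proof (cases "\<forall>i\<ge>1. bdigit b x i = bdigit b y i")
  case True
  then show ?thesis
    using bcell_eq_iff_bdigits[of b x y k] assms by (simp add: ominus_norm_def)
next
  case False
  then have "\<exists>i\<ge>1. bdigit b x i \<noteq> bdigit b y i" by blast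
  then obtain L where L: "1 \<le> L" "bdigit b x L \<noteq> bdigit b y L"
    and before_L: "\<And>i. 1 \<le> i \<Longrightarrow> i < L \<Longrightarrow> bdigit b x i = bdigit b y i"
    and norm: "ominus_norm b x y = 1 / real b ^ L"
    by (rule ominus_norm_first_difference) (rule that)
  have "ominus_norm b x y \<le> 1 / real b ^ Suc k \<longleftrightarrow> Suc k \<le> L"
    unfolding norm using inverse_power_le_iff[OF assms(1)] .
  also have "\<dots> \<longleftrightarrow> (\<forall>i. 1 \<le> i \<and> i \<le> k \<longrightarrow> bdigit b x i = bdigit b y i)"
    using L before_L by (metis Suc_le_eq le_less_trans not_less_eq_eq)
  finally show ?thesis
    using bcell_eq_iff_bdigits[of b x y k] assms by simp
qed

text \<open>box_index b s dd X is the vector (a_0, ..., a_(s-1)) of the elementary interval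
  with side lengths b^-(dd j) containing X; restricting it to {..<s} makes equal indices mean the
  same interval.\<close>

definition box_index :: "nat \<Rightarrow> nat \<Rightarrow> (nat \<Rightarrow> nat) \<Rightarrow> (nat \<Rightarrow> real) \<Rightarrow> nat \<Rightarrow> nat" where
  "box_index b s dd X = restrict (\<lambda>j. nat (bcell b (X j) (dd j))) {..<s}"

definition box_indices :: "nat \<Rightarrow> nat \<Rightarrow> (nat \<Rightarrow> nat) \<Rightarrow> (nat \<Rightarrow> nat) set" where
  "box_indices b s dd = (\<Pi>\<^sub>E j\<in>{..<s}. {..<b ^ dd j})"

lemma card_box_indices: "card (box_indices b s dd) = b ^ (\<Sum>j<s. dd j)"
  by (simp add: box_indices_def card_PiE power_sum)

lemma box_index_in_box_indices:
  assumes "0 < b" "\<forall>j<s. 0 \<le> X j \<and> X j < 1"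
  shows "box_index b s dd X \<in> box_indices b s dd"
proof -
  have "nat (bcell b (X j) (dd j)) < b ^ dd j" if "j < s" for j
    using bcell_less[OF assms(1), of "X j" "dd j"] bcell_nonneg[of "X j" b "dd j"] assms(2) that
    by (simp add: nat_less_iff)
  then show ?thesis by (simp add: box_index_def box_indices_def)
qed

lemma box_index_eq_iff:
  assumes "\<forall>j<s. 0 \<le> X j \<and> 0 \<le> Y j"
  shows "box_index b s dd X = box_index b s dd Y \<longleftrightarrow>
    (\<forall>j<s. bcell b (X j) (dd j) = bcell b (Y j) (dd j))"
proof -
  have "box_index b s dd X = box_index b s dd Y \<longleftrightarrow>
      (\<forall>j<s. nat (bcell b (X j) (dd j)) = nat (bcell b (Y j) (dd j)))"
    unfolding box_index_def by (auto simp: fun_eq_iff)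
  then show ?thesis
    using assms bcell_nonneg by (simp add: eq_nat_nat_iff)
qed

lemma box_index_eq_restrict_iff:
  assumes "0 < b" "\<forall>j<s. 0 \<le> X j"
  shows "box_index b s dd X = restrict a {..<s} \<longleftrightarrow>
    (\<forall>j<s. real (a j) / real b ^ dd j \<le> X j \<and> X j < (real (a j) + 1) / real b ^ dd j)"
proof -
  have "box_index b s dd X = restrict a {..<s} \<longleftrightarrow> (\<forall>j<s. bcell b (X j) (dd j) = int (a j))"
  proof -
    have "box_index b s dd X = restrict a {..<s} \<longleftrightarrow> (\<forall>j<s. nat (bcell b (X j) (dd j)) = a j)"
      unfolding box_index_def by (auto simp: fun_eq_iff)
    then show ?thesis
      using assms(2) bcell_nonneg by (auto simp: nat_eq_iff)
  qed
  also have "\<dots> \<longleftrightarrow>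
      (\<forall>j<s. real (a j) / real b ^ dd j \<le> X j \<and> X j < (real (a j) + 1) / real b ^ dd j)"
    using assms(1) by (simp add: bcell_def floor_eq_iff field_simps)
  finally show ?thesis .
qed

lemma pnorm_le_of_bcell_eq:
  assumes b: "1 < b" and XY: "\<forall>j<s. 0 \<le> X j \<and> X j < 1 \<and> 0 \<le> Y j \<and> Y j < 1"
    and "(\<Sum>j<s. dd j) = t" and same: "\<forall>j<s. bcell b (X j) (dd j) = bcell b (Y j) (dd j)"
  shows "pnorm b s X Y \<le> 1 / real b ^ (t + s)"
proof -
  have "pnorm b s X Y \<le> (\<Prod>j<s. 1 / real b ^ Suc (dd j))"
    unfolding pnorm_def
  proof (rule prod_mono)
    fix j assume "j \<in> {..<s}"
    then show "0 \<le> ominus_norm b (X j) (Y j) \<and> ominus_norm b (X j) (Y j) \<le> 1 / real b ^ Suc (dd j)"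
      using ominus_norm_le_iff_bcell_eq[OF b] XY same ominus_norm_nonneg by blast
  qed
  also have "\<dots> = 1 / real b ^ (t + s)"
    using prod_inverse_powers[where c = dd] assms(3) by simp
  finally show ?thesis .
qed

lemma bcell_eq_of_pnorm_le:
  assumes b: "1 < b" and XY: "\<forall>j<s. 0 \<le> X j \<and> X j < 1 \<and> 0 \<le> Y j \<and> Y j < 1"
    and le: "pnorm b s X Y \<le> 1 / real b ^ (t + s)"
  shows "\<exists>dd. (\<Sum>j<s. dd j) = t \<and> (\<forall>j<s. bcell b (X j) (dd j) = bcell b (Y j) (dd j))"
proof -
  have factor_le_iff: "ominus_norm b (X j) (Y j) \<le> 1 / real b ^ Suc k \<longleftrightarrow>
      bcell b (X j) k = bcell b (Y j) k" if "j < s" for j k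
    using ominus_norm_le_iff_bcell_eq[OF b] XY that by blast
  show ?thesis
  proof (cases "\<exists>j0<s. ominus_norm b (X j0) (Y j0) = 0")
    case True
    then obtain j0 where j0: "j0 < s" "ominus_norm b (X j0) (Y j0) = 0" by blast
    define dd where "dd = (\<lambda>j. if j = j0 then t else 0)"
    have "bcell b (X j) (dd j) = bcell b (Y j) (dd j)" if "j < s" for j
    proof (cases "j = j0")
      case True
      then show ?thesis
        using j0 factor_le_iff[OF j0(1), of t] by (simp add: dd_def)
    next
      case False
      then show ?thesis using XY that bcell_0 by (simp add: dd_def)
    qed
    moreover have "(\<Sum>j<s. dd j) = t" using j0 by (simp add: dd_def)
    ultimately show ?thesis by blast
  next
    case False
    then have "\<forall>j<s. \<exists>c. ominus_norm b (X j) (Y j) = 1 / real b ^ Suc c"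
      using ominus_norm_cases by blast
    then obtain c where c: "\<forall>j<s. ominus_norm b (X j) (Y j) = 1 / real b ^ Suc (c j)"
      by metis
    have "pnorm b s X Y = 1 / real b ^ ((\<Sum>j<s. c j) + s)"
      unfolding pnorm_def prod_inverse_powers[symmetric] by (rule prod.cong) (simp_all add: c)
    with le have "t \<le> (\<Sum>j<s. c j)"
      using inverse_power_le_iff[OF b] by simp
    then obtain dd where dd: "(\<Sum>j<s. dd j) = t" "\<forall>j<s. dd j \<le> c j"
      using sum_split_below by blast
    have "bcell b (X j) (dd j) = bcell b (Y j) (dd j)" if "j < s" for j
    proof -
      have "ominus_norm b (X j) (Y j) \<le> 1 / real b ^ Suc (dd j)"
        using c dd(2) that inverse_power_le_iff[OF b, of "Suc (c j)" "Suc (dd j)"] by simp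
      then show ?thesis using factor_le_iff[OF that] by blast
    qed
    with dd(1) show ?thesis by blast
  qed
qed

lemma pnorm_le_iff_box_index_eq:
  assumes "1 < b" and XY: "\<forall>j<s. 0 \<le> X j \<and> X j < 1 \<and> 0 \<le> Y j \<and> Y j < 1"
  shows "pnorm b s X Y \<le> 1 / real b ^ (t + s) \<longleftrightarrow>
    (\<exists>dd. (\<Sum>j<s. dd j) = t \<and> box_index b s dd X = box_index b s dd Y)"
  using pnorm_le_of_bcell_eq[OF assms] bcell_eq_of_pnorm_le[OF assms] XY
  by (auto simp: box_index_eq_iff)

lemma is_net_iff_inj_on_box_index:
  assumes b: "0 < b" and x: "\<forall>n<b ^ m. \<forall>j<s. 0 \<le> x n j \<and> x n j < 1"
  shows "is_net b m s x \<longleftrightarrow>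
    (\<forall>dd. (\<Sum>j<s. dd j) = m \<longrightarrow> inj_on (\<lambda>n. box_index b s dd (x n)) {..<b ^ m})"
proof -
  define in_box where "in_box dd a n \<longleftrightarrow>
    (\<forall>j<s. real (a j) / real b ^ dd j \<le> x n j \<and> x n j < (real (a j) + 1) / real b ^ dd j)"
    for dd a n
  have "(\<forall>a. (\<forall>j<s. a j < b ^ dd j) \<longrightarrow> card {n. n < b ^ m \<and> in_box dd a n} = 1)
      \<longleftrightarrow> inj_on (\<lambda>n. box_index b s dd (x n)) {..<b ^ m}"
    if "(\<Sum>j<s. dd j) = m" for dd
  proof -
    let ?fibre = "\<lambda>y. {n\<in>{..<b ^ m}. box_index b s dd (x n) = y}"
    have "{n. n < b ^ m \<and> in_box dd a n} = ?fibre (restrict a {..<s})" for a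
      unfolding in_box_def using box_index_eq_restrict_iff[OF b] x by auto
    then have "(\<forall>a. (\<forall>j<s. a j < b ^ dd j) \<longrightarrow> card {n. n < b ^ m \<and> in_box dd a n} = 1) \<longleftrightarrow>
        (\<forall>y\<in>box_indices b s dd. card (?fibre y) = 1)"
      using all_restrict_iff_Ball_PiE[of "{..<s}" "\<lambda>j. {..<b ^ dd j}" "\<lambda>y. card (?fibre y) = 1"]
      by (simp add: box_indices_def Ball_def)
    also have "\<dots> \<longleftrightarrow> inj_on (\<lambda>n. box_index b s dd (x n)) {..<b ^ m}"
    proof (rule card_fibres_eq_1_iff_inj_on)
      show "finite (box_indices b s dd)" by (simp add: box_indices_def finite_PiE)
      show "card {..<b ^ m} = card (box_indices b s dd)" using that by (simp add: card_box_indices)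
      show "(\<lambda>n. box_index b s dd (x n)) ` {..<b ^ m} \<subseteq> box_indices b s dd"
        using box_index_in_box_indices[OF b] x by blast
    qed
    finally show ?thesis .
  qed
  moreover have "is_net b m s x \<longleftrightarrow> (\<forall>dd. (\<Sum>j<s. dd j) = m \<longrightarrow>
      (\<forall>a. (\<forall>j<s. a j < b ^ dd j) \<longrightarrow> card {n. n < b ^ m \<and> in_box dd a n} = 1))"
    unfolding is_net_def in_box_def by blast
  ultimately show ?thesis by simp
qed

lemma not_inj_on_box_index:
  assumes "0 < b" "\<forall>n<N. \<forall>j<s. 0 \<le> x n j \<and> x n j < 1" "b ^ (\<Sum>j<s. dd j) < N"
  shows "\<not> inj_on (\<lambda>n. box_index b s dd (x n)) {..<N}"
proof
  assume "inj_on (\<lambda>n. box_index b s dd (x n)) {..<N}"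
  moreover have "(\<lambda>n. box_index b s dd (x n)) ` {..<N} \<subseteq> box_indices b s dd"
    using box_index_in_box_indices[OF assms(1)] assms(2) by blast
  moreover have "finite (box_indices b s dd)" by (simp add: box_indices_def finite_PiE)
  ultimately have "card {..<N} \<le> card (box_indices b s dd)"
    by (rule card_inj_on_le)
  with assms(3) show False by (simp add: card_box_indices)
qed

lemma close_pair_iff_not_inj_on_box_index:
  fixes N :: nat
  assumes "1 < b" and x: "\<forall>n<N. \<forall>j<s. 0 \<le> x n j \<and> x n j < 1"
  shows "(\<exists>k n. k < n \<and> n < N \<and> pnorm b s (x n) (x k) \<le> 1 / real b ^ (t + s)) \<longleftrightarrow>
    (\<exists>dd. (\<Sum>j<s. dd j) = t \<and> \<not> inj_on (\<lambda>n. box_index b s dd (x n)) {..<N})"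
proof -
  have "pnorm b s (x n) (x k) \<le> 1 / real b ^ (t + s) \<longleftrightarrow>
      (\<exists>dd. (\<Sum>j<s. dd j) = t \<and> box_index b s dd (x n) = box_index b s dd (x k))"
    if "k < n" "n < N" for k n
  proof (rule pnorm_le_iff_box_index_eq[OF assms(1)])
    have "k < N" using that by simp
    then show "\<forall>j<s. 0 \<le> x n j \<and> x n j < 1 \<and> 0 \<le> x k j \<and> x k j < 1"
      using x that by simp
  qed
  then show ?thesis unfolding not_inj_on_lessThan_iff by blast
qed

lemma admissible_iff_all_pairs:
  assumes "1 < b ^ m"
  shows "admissible b m s d x \<longleftrightarrow>
    (\<forall>k n. k < n \<and> n < b ^ m \<longrightarrow> real b powi - (int m + d) < pnorm b s (x n) (x k))"
proof -
  let ?P = "{pnorm b s (x n) (x k) | k n. k < n \<and> n < b ^ m}"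
  have "?P \<subseteq> (\<lambda>(k, n). pnorm b s (x n) (x k)) ` ({..<b ^ m} \<times> {..<b ^ m})" by auto
  then have "finite ?P" by (rule finite_subset) auto
  moreover have "?P \<noteq> {}" using assms by blast
  ultimately show ?thesis unfolding admissible_def by (auto simp: Min_gr_iff)
qed

lemma admissible_iff_is_net:
  assumes b: "1 < b" and "1 \<le> m" and x: "\<forall>n<b ^ m. \<forall>j<s. 0 \<le> x n j \<and> x n j < 1"
  shows "admissible b m s (int s) x \<longleftrightarrow> is_net b m s x"
proof -
  have "1 < b ^ m" using assms(1,2) by (intro one_less_power) auto
  have "real b powi - (int m + int s) = 1 / real b ^ (m + s)"
    by (simp add: power_int_minus_divide flip: of_nat_add power_int_of_nat)
  then have "admissible b m s (int s) x \<longleftrightarrow>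
      \<not> (\<exists>k n. k < n \<and> n < b ^ m \<and> pnorm b s (x n) (x k) \<le> 1 / real b ^ (m + s))"
    unfolding admissible_iff_all_pairs[OF \<open>1 < b ^ m\<close>] by (auto simp: not_le)
  also have "\<dots> \<longleftrightarrow> is_net b m s x"
    using b close_pair_iff_not_inj_on_box_index[OF b x] is_net_iff_inj_on_box_index[of b m s x] x
    by auto
  finally show ?thesis .
qed

lemma not_admissible_if_less:
  assumes b: "1 < b" and "1 \<le> s" "1 \<le> m" and x: "\<forall>n<b ^ m. \<forall>j<s. 0 \<le> x n j \<and> x n j < 1"
    and "d < int s"
  shows "\<not> admissible b m s d x"
proof -
  define dd where "dd = (\<lambda>j::nat. if j = 0 then m - 1 else 0)"
  have "(\<Sum>j<s. dd j) = m - 1" using assms(2) by (simp add: dd_def)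
  moreover have "b ^ (m - 1) < b ^ m" using b assms(3) by simp
  ultimately obtain k n where "k < n" "n < b ^ m"
    and close: "pnorm b s (x n) (x k) \<le> 1 / real b ^ (m - 1 + s)"
    using close_pair_iff_not_inj_on_box_index[OF b x, of "m - 1"]
      not_inj_on_box_index[OF _ x, where dd = dd] b
    by auto
  have "1 / real b ^ (m - 1 + s) = real b powi - int (m - 1 + s)"
    by (simp only: power_int_minus_divide power_int_of_nat)
  also have "\<dots> \<le> real b powi - (int m + d)"
    using assms(3,5) b by (intro power_int_increasing) auto
  finally have "pnorm b s (x n) (x k) \<le> real b powi - (int m + d)"
    using close by linarith
  moreover have "1 < b ^ m" using b assms(3) by (intro one_less_power) auto
  ultimately show ?thesis
    using \<open>k < n\<close> \<open>n < b ^ m\<close> by (auto simp: admissible_iff_all_pairs not_less)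
qed

theorem lemma2p1:
  fixes b s m :: nat and x :: "nat \<Rightarrow> nat \<Rightarrow> real"
  assumes "b \<ge> 2" and "s \<ge> 1" and "m \<ge> 1"
    and "\<forall>n<b ^ m. \<forall>j<s. 0 \<le> x n j \<and> x n j < 1"
  shows "(admissible b m s (int s) x \<longleftrightarrow> is_net b m s x) \<and>
         (\<forall>d::int. d < int s \<longrightarrow> \<not> admissible b m s d x)"
proof -
  have b: "1 < b" using assms(1) by simp
  show ?thesis
    using admissible_iff_is_net[OF b assms(3,4)] not_admissible_if_less[OF b assms(2-4)] by blast
qed

end
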